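(* Under the same independence assumptions, for any two instances $\mathbf x,\mathbf y$: if $\lim_{n\to\infty}P(\mathbf y\in L(\mathbf x)\mid\mathcal D)=0$ then $P(\mathbf y\in\bar I(\mathbf x)\mid\mathcal D)=0$; if $\lim_{n\to\infty}P(\mathbf y\in L(\mathbf x)\mid\mathcal D)>0$ then $P(\mathbf y\in\bar I(\mathbf x)\mid\mathcal D)=1$.
   Context: Setting: $n$ instances with covariates in $\mathbb R^d$ form the dataset $\mathcal D=\mathcal D_n$; a forest $\Theta_K$ of $K$ axis-aligned causal trees is built on $\mathcal D$, the trees being independent given $\mathcal D$. $L_k(\mathbf x)$ is the leaf of tree $k$ containing $\mathbf x$ and $I(\mathbf x,\theta_k)$ its box; $P(\mathbf y\in L(\mathbf x)\mid\mathcal D)$ denotes $P(\mathbf y\in L_k(\mathbf x)\mid\mathcal D)$, the same for every $k$, and the events $\{\mathbf y\in L_k(\mathbf x)\}$, $k=1,\dots,K$, are independent given $\mathcal D$. LSLI with $K$ trees: $\bar I(\mathbf x,\Theta_K)=\bigcap_{s>K-\sqrt K}\bigcap_{1\le i_1<\cdots<i_s\le K}\bigcup_{k=1}^sI(\mathbf x,\theta_{i_k})$, and $P(\mathbf y\in\bar I(\mathbf x)\mid\mathcal D):=\lim_{K\to\infty}\lim_{n\to\infty}P(\mathbf y\in\bar I(\mathbf x,\Theta_K)\mid\mathcal D_n)$. *)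

theory Defs
  imports "HOL-Probability.Probability"
begin

text \<open>LSLI with K trees: given the boxes Ibox k (tree k's leaf box containing x),
  the intersection over all s > K - sqrt K and all index sets
  {i_1 < ... < i_s} of {1..K} of the union of the corresponding boxes.\<close>
definition LSLI :: "(nat \<Rightarrow> 'a set) \<Rightarrow> nat \<Rightarrow> 'a set" where
  "LSLI Ibox K = (\<Inter>s\<in>{s::nat. real K - sqrt (real K) < real s}.
      \<Inter>S\<in>{S. S \<subseteq> {1..K} \<and> card S = s}. \<Union>k\<in>S. Ibox k)"

end

theory Submission
  imports Defs "HOL-Real_Asymp.Real_Asymp"
begin

text \<open>A point y lies in the LSLI of K trees iff at least \<open>\<surd>K\<close> of the K leaf boxes contain it:
  every index set of size \<open>> K - \<surd>K\<close> meets the hit set iff the miss set has size \<open>\<le> K - \<surd>K\<close>.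
  By independence the number of hits is binomial with parameters K and \<open>p\<^sub>n\<close>, so the LSLI
  probability is a polynomial in \<open>p\<^sub>n\<close> and tends, as \<open>n \<rightarrow> \<infinity>\<close>, to the probability of at
  least \<open>\<surd>K\<close> successes in K trials with success probability p. For p = 0 this is 0 as soon
  as K \<ge> 1. For p > 0, weighting each outcome with fewer than \<open>\<surd>K\<close> successes by
  \<open>2\<^bsup>\<surd>K - #successes\<^esup> \<ge> 1\<close> bounds the complementary probability by
  \<open>2\<^bsup>\<surd>K\<^esup> (1 - p/2)\<^sup>K \<rightarrow> 0\<close>.\<close>

lemma mem_LSLI_iff:
  "y \<in> LSLI B K \<longleftrightarrow> sqrt (real K) \<le> real (card {k\<in>{1..K}. y \<in> B k})"
proof -
  define Hit where "Hit = {k\<in>{1..K}. y \<in> B k}"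
  define Miss where "Miss = {1..K} - Hit"
  have "Hit \<subseteq> {1..K}" unfolding Hit_def by blast
  then have "real (card Miss) = real K - real (card Hit)"
    unfolding Miss_def by (metis card_Diff_subset card_atLeastAtMost card_mono diff_Suc_1
        finite_atLeastAtMost finite_subset of_nat_diff)
  moreover have "y \<in> LSLI B K \<longleftrightarrow> real (card Miss) \<le> real K - sqrt (real K)"
  proof
    assume mem: "y \<in> LSLI B K"
    show "real (card Miss) \<le> real K - sqrt (real K)"
    proof (rule ccontr)
      assume "\<not> ?thesis"
      then have "real K - sqrt (real K) < real (card Miss)" by linarith
      moreover have "Miss \<subseteq> {1..K}" unfolding Miss_def by blast
      ultimately have "\<exists>k\<in>Miss. y \<in> B k" using mem unfolding LSLI_def by blast
      then show False unfolding Miss_def Hit_def by auto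
    qed
  next
    assume small: "real (card Miss) \<le> real K - sqrt (real K)"
    have "\<exists>k\<in>S. y \<in> B k" if "S \<subseteq> {1..K}" "real K - sqrt (real K) < real (card S)" for S
    proof (rule ccontr)
      assume "\<not> (\<exists>k\<in>S. y \<in> B k)"
      with that(1) have "card S \<le> card Miss" unfolding Miss_def Hit_def by (intro card_mono) auto
      with that(2) small show False by linarith
    qed
    then show "y \<in> LSLI B K" unfolding LSLI_def by blast
  qed
  ultimately show ?thesis unfolding Hit_def by linarith
qed

lemma (in prob_space) hit_set_event:
  assumes "\<And>k. k \<in> J \<Longrightarrow> A k \<in> events" "finite J"
  shows "{\<omega> \<in> space M. {k\<in>J. \<omega> \<in> A k} = H} \<in> events"
proof -
  have "{\<omega> \<in> space M. {k\<in>J. \<omega> \<in> A k} = H} = {\<omega> \<in> space M. H \<subseteq> J \<and> (\<forall>k\<in>J. \<omega> \<in> A k \<longleftrightarrow> k \<in> H)}"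
    by auto
  also have "\<dots> \<in> events"
    using assms by measurable
  finally show ?thesis .
qed

lemma (in prob_space) indep_events_compl_outside:
  assumes "indep_events A I"
  shows "indep_events (\<lambda>k. if k \<in> H then A k else space M - A k) I"
proof -
  have "indep_sets (\<lambda>k. sigma_sets (space M) {A k}) I"
    using assms unfolding indep_events_def_alt
    by (intro indep_sets_sigma) (auto simp: Int_stable_def)
  then show ?thesis
    unfolding indep_events_def_alt
    by (rule indep_sets_mono_sets) (auto intro: sigma_sets.Compl)
qed

lemma (in prob_space) prob_hit_set_eq:
  assumes indep: "indep_events A I" and J: "finite J" "J \<subseteq> I" and H: "H \<subseteq> J"
  shows "prob {\<omega> \<in> space M. {k\<in>J. \<omega> \<in> A k} = H}
    = (\<Prod>k\<in>H. prob (A k)) * (\<Prod>k\<in>J - H. 1 - prob (A k))"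
proof (cases "J = {}")
  case True
  with H show ?thesis by (simp add: prob_space)
next
  case False
  define B where "B k = (if k \<in> H then A k else space M - A k)" for k
  have events: "A k \<in> events" if "k \<in> J" for k
    using indep J that by (auto simp: indep_events_def)
  have mem_B: "\<omega> \<in> B k \<longleftrightarrow> \<omega> \<in> space M \<and> (\<omega> \<in> A k \<longleftrightarrow> k \<in> H)" if "k \<in> J" for k \<omega>
    using events[OF that, THEN sets.sets_into_space] by (auto simp: B_def)
  have "{\<omega> \<in> space M. {k\<in>J. \<omega> \<in> A k} = H} = (\<Inter>k\<in>J. B k)"
    using False H by (auto simp: mem_B)
  then have "prob {\<omega> \<in> space M. {k\<in>J. \<omega> \<in> A k} = H} = (\<Prod>k\<in>J. prob (B k))"
    using indep_events_compl_outside[OF indep, of H] J False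
    by (simp add: indep_events_def B_def)
  also have "\<dots> = (\<Prod>k\<in>H. prob (B k)) * (\<Prod>k\<in>J - H. prob (B k))"
    by (simp add: prod.subset_diff[OF H J(1)] mult.commute)
  also have "\<dots> = (\<Prod>k\<in>H. prob (A k)) * (\<Prod>k\<in>J - H. 1 - prob (A k))"
    using H events by (simp add: B_def prob_compl)
  finally show ?thesis .
qed

lemma (in prob_space) prob_hit_count:
  assumes indep: "indep_events A I" and J: "finite J" "J \<subseteq> I"
    and same: "\<And>k. k \<in> J \<Longrightarrow> prob (A k) = a"
  shows "prob {\<omega> \<in> space M. P (card {k\<in>J. \<omega> \<in> A k})}
    = (\<Sum>H\<in>{H\<in>Pow J. P (card H)}. a ^ card H * (1 - a) ^ card (J - H))"
proof -
  define E where "E H = {\<omega> \<in> space M. {k\<in>J. \<omega> \<in> A k} = H}" for H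
  have "{\<omega> \<in> space M. P (card {k\<in>J. \<omega> \<in> A k})} = (\<Union>H\<in>{H\<in>Pow J. P (card H)}. E H)"
    by (auto simp: E_def)
  moreover have "prob (\<Union>H\<in>{H\<in>Pow J. P (card H)}. E H) = (\<Sum>H\<in>{H\<in>Pow J. P (card H)}. prob (E H))"
  proof (rule finite_measure_finite_Union)
    show "E ` {H\<in>Pow J. P (card H)} \<subseteq> events"
      using indep J unfolding E_def by (auto intro!: hit_set_event simp: indep_events_def)
    show "disjoint_family_on E {H\<in>Pow J. P (card H)}"
      unfolding disjoint_family_on_def E_def by auto
  qed (use J in simp)
  moreover have "prob (E H) = a ^ card H * (1 - a) ^ card (J - H)" if "H \<subseteq> J" for H
  proof -
    have "(\<Prod>k\<in>H. prob (A k)) = a ^ card H" "(\<Prod>k\<in>J - H. 1 - prob (A k)) = (1 - a) ^ card (J - H)"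
      using that same by (simp_all add: subset_iff)
    then show ?thesis
      unfolding E_def prob_hit_set_eq[OF indep J that] by simp
  qed
  ultimately show ?thesis
    by simp
qed

lemma sum_Pow_power_card:
  fixes a b :: "'a::comm_semiring_1"
  assumes "finite J"
  shows "(\<Sum>H\<in>Pow J. a ^ card H * b ^ card (J - H)) = (a + b) ^ card J"
proof -
  have "(\<Sum>H\<in>Pow J. a ^ card H * b ^ card (J - H)) = (\<Sum>H\<in>Pow J. (\<Prod>k\<in>H. a) * (\<Prod>k\<in>J - H. b))"
    by simp
  also have "\<dots> = (a + b) ^ card J"
    using prod_add[OF assms, of "\<lambda>_. a" "\<lambda>_. b"] by simp
  finally show ?thesis .
qed

definition sqrt_hits_prob :: "real \<Rightarrow> nat \<Rightarrow> real" where
  "sqrt_hits_prob a K = (\<Sum>H\<in>{H\<in>Pow {1..K}. sqrt (real K) \<le> real (card H)}.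
      a ^ card H * (1 - a) ^ card ({1..K} - H))"

lemma tendsto_sqrt_hits_prob:
  "f \<longlonglongrightarrow> a \<Longrightarrow> (\<lambda>n. sqrt_hits_prob (f n) K) \<longlonglongrightarrow> sqrt_hits_prob a K"
  unfolding sqrt_hits_prob_def by (intro tendsto_intros)

lemma sqrt_hits_prob_0: "K \<ge> 1 \<Longrightarrow> sqrt_hits_prob 0 K = 0"
  unfolding sqrt_hits_prob_def by (intro sum.neutral) (auto simp: power_0_left)

lemma one_minus_sqrt_hits_prob:
  "1 - sqrt_hits_prob a K = (\<Sum>H\<in>{H\<in>Pow {1..K}. real (card H) < sqrt (real K)}.
      a ^ card H * (1 - a) ^ card ({1..K} - H))"
proof -
  have "1 = (\<Sum>H\<in>Pow {1..K}. a ^ card H * (1 - a) ^ card ({1..K} - H))"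
    using sum_Pow_power_card[of "{1..K}" a "1 - a"] by simp
  also have "\<dots> = sqrt_hits_prob a K + (\<Sum>H\<in>{H\<in>Pow {1..K}. real (card H) < sqrt (real K)}.
      a ^ card H * (1 - a) ^ card ({1..K} - H))"
    unfolding sqrt_hits_prob_def by (subst sum.union_disjoint[symmetric]) (auto intro: sum.cong)
  finally show ?thesis by simp
qed

lemma sqrt_hits_prob_le_1:
  assumes "0 \<le> a" "a \<le> 1"
  shows "sqrt_hits_prob a K \<le> 1"
proof -
  have "0 \<le> 1 - sqrt_hits_prob a K"
    unfolding one_minus_sqrt_hits_prob using assms by (intro sum_nonneg) simp
  then show ?thesis by simp
qed

lemma one_minus_sqrt_hits_prob_le:
  assumes "0 \<le> a" "a \<le> 1"
  shows "1 - sqrt_hits_prob a K \<le> 2 powr sqrt (real K) * (1 - a / 2) ^ K"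
proof -
  define t where "t H = a ^ card H * (1 - a) ^ card ({1..K} - H)" for H :: "nat set"
  define w where "w H = 2 powr sqrt (real K) * (1 / 2) ^ card H" for H :: "nat set"
  have t_nonneg: "0 \<le> t H" for H
    unfolding t_def using assms by simp
  have "1 \<le> w H" if "real (card H) < sqrt (real K)" for H
  proof -
    have "1 = 2 powr real (card H) * (1 / 2) ^ card H"
      by (simp add: powr_realpow power_one_over)
    also have "\<dots> \<le> w H"
      unfolding w_def using that by (intro mult_right_mono) auto
    finally show ?thesis .
  qed
  then have "t H \<le> t H * w H" if "real (card H) < sqrt (real K)" for H
    using mult_left_mono[OF _ t_nonneg] that by fastforce
  then have "1 - sqrt_hits_prob a K \<le> (\<Sum>H\<in>{H\<in>Pow {1..K}. real (card H) < sqrt (real K)}. t H * w H)"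
    unfolding one_minus_sqrt_hits_prob t_def[symmetric]
    by (intro sum_mono) auto
  also have "\<dots> \<le> (\<Sum>H\<in>Pow {1..K}. t H * w H)"
    using t_nonneg by (intro sum_mono2) (auto simp: w_def)
  also have "\<dots> = 2 powr sqrt (real K) * (\<Sum>H\<in>Pow {1..K}. (a / 2) ^ card H * (1 - a) ^ card ({1..K} - H))"
    unfolding sum_distrib_left t_def w_def
    by (intro sum.cong) (auto simp: power_mult_distrib power_divide)
  also have "\<dots> = 2 powr sqrt (real K) * (1 - a / 2) ^ K"
    by (subst sum_Pow_power_card) auto
  finally show ?thesis .
qed

lemma powr_sqrt_mult_power_tendsto_0:
  fixes b c :: real
  assumes "0 < b" "0 < c" "c < 1"
  shows "(\<lambda>K. b powr sqrt (real K) * c ^ K) \<longlonglongrightarrow> 0"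
proof -
  have "(\<lambda>K. b powr sqrt (real K) * c ^ K) = (\<lambda>K. exp (sqrt (real K) * ln b + real K * ln c))"
    using assms by (auto simp: powr_def exp_add exp_of_nat_mult mult.commute)
  also have "\<dots> \<longlonglongrightarrow> 0"
    using assms by real_asymp
  finally show ?thesis .
qed

lemma sqrt_hits_prob_tendsto_1:
  assumes "0 < a" "a \<le> 1"
  shows "(\<lambda>K. sqrt_hits_prob a K) \<longlonglongrightarrow> 1"
proof -
  have "(\<lambda>K. 1 - sqrt_hits_prob a K) \<longlonglongrightarrow> 0"
  proof (rule tendsto_sandwich)
    show "\<forall>\<^sub>F K in sequentially. 0 \<le> 1 - sqrt_hits_prob a K"
      using sqrt_hits_prob_le_1 assms by simp
    show "\<forall>\<^sub>F K in sequentially. 1 - sqrt_hits_prob a K \<le> 2 powr sqrt (real K) * (1 - a / 2) ^ K"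
      using one_minus_sqrt_hits_prob_le assms by simp
    show "(\<lambda>K. 2 powr sqrt (real K) * (1 - a / 2) ^ K) \<longlonglongrightarrow> 0"
      using assms by (intro powr_sqrt_mult_power_tendsto_0) auto
  qed simp
  then show ?thesis
    using tendsto_diff[OF tendsto_const[of 1]] by fastforce
qed

lemma (in prob_space) prob_LSLI_eq:
  assumes indep: "indep_events (\<lambda>k. {\<omega> \<in> space M. y \<in> B k \<omega>}) {1..}"
    and same: "\<And>k. k \<in> {1..K} \<Longrightarrow> prob {\<omega> \<in> space M. y \<in> B k \<omega>} = a"
  shows "prob {\<omega> \<in> space M. y \<in> LSLI (\<lambda>k. B k \<omega>) K} = sqrt_hits_prob a K"
proof -
  define hit where "hit k = {\<omega> \<in> space M. y \<in> B k \<omega>}" for k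
  have "{k\<in>{1..K}. \<omega> \<in> hit k} = {k\<in>{1..K}. y \<in> B k \<omega>}" if "\<omega> \<in> space M" for \<omega>
    using that by (auto simp: hit_def)
  then have "{\<omega> \<in> space M. y \<in> LSLI (\<lambda>k. B k \<omega>) K}
      = {\<omega> \<in> space M. sqrt (real K) \<le> real (card {k\<in>{1..K}. \<omega> \<in> hit k})}"
    by (simp add: mem_LSLI_iff cong: conj_cong)
  then show ?thesis
    using prob_hit_count[where P = "\<lambda>c. sqrt (real K) \<le> real c" and J = "{1..K}" and A = hit]
      indep same unfolding sqrt_hits_prob_def hit_def by simp
qed

lemma sqrt_hits_prob_0_tendsto_0: "(\<lambda>K. sqrt_hits_prob 0 K) \<longlonglongrightarrow> 0"
  using sqrt_hits_prob_0 by (intro tendsto_eventually eventually_sequentiallyI) auto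

theorem mainTheorem6:
  fixes M :: "nat \<Rightarrow> 'w measure"
    and I :: "nat \<Rightarrow> nat \<Rightarrow> real ^ 'd \<Rightarrow> 'w \<Rightarrow> (real ^ 'd) set"
    and x y :: "real ^ 'd"
    and p :: real
  assumes prob: "\<And>n. prob_space (M n)"
    and leaf: "\<And>n k \<omega>. \<omega> \<in> space (M n) \<Longrightarrow> x \<in> I n k x \<omega>"
    and meas: "\<And>n k. {\<omega> \<in> space (M n). y \<in> I n k x \<omega>} \<in> sets (M n)"
    and indep: "\<And>n. prob_space.indep_events (M n)
                   (\<lambda>k. {\<omega> \<in> space (M n). y \<in> I n k x \<omega>}) {1..}"
    and same: "\<And>n k. k \<ge> 1 \<Longrightarrow> measure (M n) {\<omega> \<in> space (M n). y \<in> I n k x \<omega>}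
                 = measure (M n) {\<omega> \<in> space (M n). y \<in> I n 1 x \<omega>}"
    and lim: "(\<lambda>n. measure (M n) {\<omega> \<in> space (M n). y \<in> I n 1 x \<omega>}) \<longlonglongrightarrow> p"
  shows "(p = 0 \<longrightarrow> (\<exists>q. (\<forall>K. (\<lambda>n. measure (M n)
              {\<omega> \<in> space (M n). y \<in> LSLI (\<lambda>k. I n k x \<omega>) K}) \<longlonglongrightarrow> q K)
            \<and> q \<longlonglongrightarrow> 0))
       \<and> (p > 0 \<longrightarrow> (\<exists>q. (\<forall>K. (\<lambda>n. measure (M n)
              {\<omega> \<in> space (M n). y \<in> LSLI (\<lambda>k. I n k x \<omega>) K}) \<longlonglongrightarrow> q K)
            \<and> q \<longlonglongrightarrow> 1))"
proof -
  define P where "P n = measure (M n) {\<omega> \<in> space (M n). y \<in> I n 1 x \<omega>}" for n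
  have LSLI_prob: "measure (M n) {\<omega> \<in> space (M n). y \<in> LSLI (\<lambda>k. I n k x \<omega>) K}
      = sqrt_hits_prob (P n) K" for n K
    unfolding P_def by (rule prob_space.prob_LSLI_eq[OF prob indep]) (rule same, simp)
  have P_lim: "P \<longlonglongrightarrow> p"
    using lim unfolding P_def[abs_def] .
  have "0 \<le> P n" "P n \<le> 1" for n
    unfolding P_def using prob_space.prob_le_1[OF prob] by auto
  then have p_range: "0 \<le> p" "p \<le> 1"
    using LIMSEQ_le_const[OF P_lim] LIMSEQ_le_const2[OF P_lim] by auto
  have LSLI_lim: "\<forall>K. (\<lambda>n. measure (M n) {\<omega> \<in> space (M n). y \<in> LSLI (\<lambda>k. I n k x \<omega>) K})
      \<longlonglongrightarrow> sqrt_hits_prob p K"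
    unfolding LSLI_prob using P_lim by (intro allI tendsto_sqrt_hits_prob)
  show ?thesis
    using LSLI_lim sqrt_hits_prob_0_tendsto_0 sqrt_hits_prob_tendsto_1[OF _ p_range(2)]
    by (intro conjI impI exI[of _ "sqrt_hits_prob p"]) simp_all
qed

end
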